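(* Consider the Graph Variance Allocation problem with $m=n$ and $S_j=\{j,j+1\}$ for every $j\in[n]$ (indices modulo $n$, so $S_n=\{n,1\}$), where all variables have the same mean $\mu$. Then the allocation $\sigma_i^2=\frac1n$ for every $i\in[n]$ is an optimal solution.
   Context: Graph Variance Allocation problem: choose $\sigma_1,\dots,\sigma_n\ge0$ with $\sum_i\sigma_i^2=1$, with $X_i\sim\mathcal N(\mu_i,\sigma_i^2)$ independent, to maximize $\mathbb{E}\sum_{j=1}^m\max_{i\in S_j}X_i$. *)

theory Defs
  imports "HOL-Probability.Probability"
begin

definition gauss :: "real \<Rightarrow> real \<Rightarrow> real measure" where
  "gauss mu s = (if s = 0 then return borel mu else density lborel (normal_density mu s))"

text \<open>Variables indexed 0..n-1, sets S 0 .. S (m-1) (nonempty subsets of 0..n-1), means mu,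
  standard deviations sd.  Objective: E sum_j max_{i in S_j} X_i, with X_i independent,
  i.e. the integral against the product of the marginal laws.\<close>
definition gva_objective ::
  "nat \<Rightarrow> nat \<Rightarrow> (nat \<Rightarrow> nat set) \<Rightarrow> (nat \<Rightarrow> real) \<Rightarrow> (nat \<Rightarrow> real) \<Rightarrow> real" where
  "gva_objective n m S mu sd =
     (\<integral>x. (\<Sum>j<m. Max (x ` S j)) \<partial>(PiM {..<n} (\<lambda>i. gauss (mu i) (sd i))))"

definition gva_feasible :: "nat \<Rightarrow> (nat \<Rightarrow> real) \<Rightarrow> bool" where
  "gva_feasible n sd \<longleftrightarrow> (\<forall>i<n. sd i \<ge> 0) \<and> (\<Sum>i<n. (sd i)\<^sup>2) = 1"

end

theory Submission
  imports Defs
begin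

text \<open>Since \<open>max a b = (a + b + \<bar>a - b\<bar>) / 2\<close> and the difference of independent
  \<open>N(\<mu>, \<sigma>\<^sup>2)\<close> and \<open>N(\<mu>, \<tau>\<^sup>2)\<close> variables is \<open>N(0, \<sigma>\<^sup>2 + \<tau>\<^sup>2)\<close>, with mean absolute value
  \<open>sqrt (2 / \<pi>) * sqrt (\<sigma>\<^sup>2 + \<tau>\<^sup>2)\<close>, the objective on a cycle of length \<open>n \<ge> 2\<close> is
  \<open>n \<mu>\<close> plus \<open>sqrt (2 / \<pi>) / 2\<close> times the sum over \<open>j\<close> of \<open>sqrt (\<sigma>_j\<^sup>2 + \<sigma>_(j+1)\<^sup>2)\<close>.
  The radicands sum to \<open>2\<close>, so by Cauchy-Schwarz this sum is at most \<open>sqrt (2 n)\<close>, which the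
  uniform allocation attains. For \<open>n = 1\<close> the uniform allocation is the only feasible one.\<close>

lemma sets_gauss [simp, measurable_cong]: "sets (gauss mu s) = sets borel"
  by (simp add: gauss_def)

lemma prob_space_gauss: "0 \<le> s \<Longrightarrow> prob_space (gauss mu s)"
  unfolding gauss_def by (auto intro: prob_space_return prob_space_normal_density)

lemma (in prob_space) distributed_normal_of_gauss:
  assumes [measurable]: "random_variable borel X"
    and law: "distr M borel X = gauss m s" and "0 < s"
  shows "distributed M lborel X (normal_density m s)"
proof -
  have "distr M lborel X = distr M borel X"
    by (rule distr_cong) simp_all
  with law \<open>0 < s\<close> show ?thesis
    by (simp add: distributed_def gauss_def)
qed

lemma (in prob_space) AE_eq_of_gauss_zero:
  assumes X: "random_variable borel X" and law: "distr M borel X = gauss m 0"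
  shows "AE \<omega> in M. X \<omega> = m"
proof -
  have "AE y in distr M borel X. y = m"
    unfolding law gauss_def by (simp add: AE_return)
  then show ?thesis
    using X by (rule AE_distrD[rotated])
qed

lemma (in prob_space) has_bochner_integral_distributed:
  assumes "distributed M N X f" "g \<in> borel_measurable N" "\<And>x. x \<in> space N \<Longrightarrow> 0 \<le> f x"
    and "has_bochner_integral N (\<lambda>x. f x * g x) c"
  shows "has_bochner_integral M (\<lambda>\<omega>. g (X \<omega>)) c"
  using assms distributed_integrable[OF assms(1-3)] distributed_integral[OF assms(1-3)]
  by (simp add: has_bochner_integral_iff)

lemma (in prob_space) has_bochner_integral_gauss_mean:
  assumes "random_variable borel X" "distr M borel X = gauss m s" "0 \<le> s"
  shows "has_bochner_integral M X m"
proof (cases "s = 0")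
  case True
  then have "AE \<omega> in M. X \<omega> = m"
    using assms AE_eq_of_gauss_zero by simp
  then show ?thesis
    using assms(1) by (subst has_bochner_integral_cong_AE[where g="\<lambda>_. m"])
      (simp_all add: has_bochner_integral_iff prob_space)
next
  case False
  then show ?thesis
    using assms normal_moment_nz_1[of s m]
    by (intro has_bochner_integral_distributed[where g="\<lambda>x. x", OF distributed_normal_of_gauss]) simp_all
qed

lemma (in prob_space) has_bochner_integral_gauss_abs_dev:
  assumes "random_variable borel X" "distr M borel X = gauss m s" "0 \<le> s"
  shows "has_bochner_integral M (\<lambda>\<omega>. \<bar>X \<omega> - m\<bar>) (s * sqrt (2 / pi))"
proof (cases "s = 0")
  case True
  then have "AE \<omega> in M. \<bar>X \<omega> - m\<bar> = 0"
    using assms AE_eq_of_gauss_zero by simp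
  then show ?thesis
    using assms(1) True
    by (subst has_bochner_integral_cong_AE[where g="\<lambda>_. 0"]) (simp_all add: has_bochner_integral_iff)
next
  case False
  then show ?thesis
    using assms normal_moment_abs_odd[of s m 0]
    by (intro has_bochner_integral_distributed[where g="\<lambda>x. \<bar>x - m\<bar>", OF distributed_normal_of_gauss])
      simp_all
qed

lemma (in prob_space) has_bochner_integral_abs_diff_indep_gauss:
  assumes indep: "indep_var borel X borel Y"
    and X: "distr M borel X = gauss m s" and Y: "distr M borel Y = gauss m t"
    and "0 \<le> s" "0 \<le> t"
  shows "has_bochner_integral M (\<lambda>\<omega>. \<bar>X \<omega> - Y \<omega>\<bar>) (sqrt (2 / pi) * sqrt (s\<^sup>2 + t\<^sup>2))"
proof -
  have [measurable]: "random_variable borel X" "random_variable borel Y"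
    using indep by (auto elim: indep_var_rv1 indep_var_rv2)
  consider "s = 0" | "t = 0" | "0 < s" "0 < t"
    using \<open>0 \<le> s\<close> \<open>0 \<le> t\<close> by linarith
  then show ?thesis
  proof cases
    case 1
    have "AE \<omega> in M. \<bar>X \<omega> - Y \<omega>\<bar> = \<bar>Y \<omega> - m\<bar>"
      using AE_eq_of_gauss_zero[of X m] X 1 by auto
    then show ?thesis
      using has_bochner_integral_gauss_abs_dev[of Y m t] Y 1 \<open>0 \<le> t\<close>
      by (subst has_bochner_integral_cong_AE) (simp_all add: mult.commute)
  next
    case 2
    have "AE \<omega> in M. \<bar>X \<omega> - Y \<omega>\<bar> = \<bar>X \<omega> - m\<bar>"
      using AE_eq_of_gauss_zero[of Y m] Y 2 by auto
    then show ?thesis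
      using has_bochner_integral_gauss_abs_dev[of X m s] X 2 \<open>0 \<le> s\<close>
      by (subst has_bochner_integral_cong_AE) (simp_all add: mult.commute)
  next
    case 3
    have "distributed M lborel (\<lambda>\<omega>. X \<omega> - Y \<omega>) (normal_density 0 (sqrt (s\<^sup>2 + t\<^sup>2)))"
      using diff_indep_normal[OF indep 3
          distributed_normal_of_gauss[OF _ X] distributed_normal_of_gauss[OF _ Y]] 3
      by simp
    moreover have "0 < sqrt (s\<^sup>2 + t\<^sup>2)"
      using 3 by (simp add: add_pos_pos)
    ultimately show ?thesis
      using normal_moment_abs_odd[of "sqrt (s\<^sup>2 + t\<^sup>2)" 0 0]
      by (intro has_bochner_integral_distributed[where g=abs]) (simp_all add: mult.commute)
  qed
qed

lemma (in prob_space) has_bochner_integral_max_indep_gauss: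
  assumes indep: "indep_var borel X borel Y"
    and X: "distr M borel X = gauss m s" and Y: "distr M borel Y = gauss m t"
    and "0 \<le> s" "0 \<le> t"
  shows "has_bochner_integral M (\<lambda>\<omega>. max (X \<omega>) (Y \<omega>)) (m + sqrt (2 / pi) * sqrt (s\<^sup>2 + t\<^sup>2) / 2)"
proof -
  have [measurable]: "random_variable borel X" "random_variable borel Y"
    using indep by (auto elim: indep_var_rv1 indep_var_rv2)
  have "max (X \<omega>) (Y \<omega>) = (X \<omega> + Y \<omega> + \<bar>X \<omega> - Y \<omega>\<bar>) / 2" for \<omega>
    by (simp add: max_def)
  moreover have "has_bochner_integral M (\<lambda>\<omega>. (X \<omega> + Y \<omega> + \<bar>X \<omega> - Y \<omega>\<bar>) / 2)
      ((m + m + sqrt (2 / pi) * sqrt (s\<^sup>2 + t\<^sup>2)) / 2)"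
    using has_bochner_integral_gauss_mean[of X m s] has_bochner_integral_gauss_mean[of Y m t]
      has_bochner_integral_abs_diff_indep_gauss[OF assms] assms
    by (intro has_bochner_integral_divide_zero has_bochner_integral_add) simp_all
  ultimately show ?thesis
    by (simp add: add_divide_distrib)
qed

lemma (in prob_space) indep_var_of_indep_vars:
  assumes indep: "indep_vars M' X I" and "j \<in> I" "k \<in> I" "j \<noteq> k"
  shows "indep_var (M' j) (X j) (M' k) (X k)"
proof -
  have "indep_var (M' j) ((\<lambda>f. f j) \<circ> (\<lambda>\<omega>. restrict (\<lambda>i. X i \<omega>) {j}))
      (M' k) ((\<lambda>f. f k) \<circ> (\<lambda>\<omega>. restrict (\<lambda>i. X i \<omega>) {k}))"
    using assms by (intro indep_var_compose[OF indep_var_restrict[OF indep]]) auto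
  then show ?thesis
    by (simp add: comp_def)
qed

lemma indep_vars_PiM_components:
  assumes M: "\<And>i. i \<in> I \<Longrightarrow> prob_space (M i)"
  shows "prob_space.indep_vars (PiM I M) M (\<lambda>i x. x i) I"
proof -
  interpret prob_space "PiM I M"
    using M by (rule prob_space_PiM)
  show ?thesis
  proof (cases "I = {}")
    case True
    then show ?thesis
      unfolding indep_vars_def indep_sets_def by simp
  next
    case False
    have "distr (PiM I M) (PiM I M) (\<lambda>x. restrict x I) = distr (PiM I M) (PiM I M) (\<lambda>x. x)"
      by (rule distr_cong) (auto simp: space_PiM)
    moreover have "PiM I (\<lambda>i. distr (PiM I M) (M i) (\<lambda>x. x i)) = PiM I M"
      using M by (intro PiM_cong) (simp_all add: distr_PiM_component)
    ultimately show ?thesis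
      using False by (subst indep_vars_iff_distr_eq_PiM') (simp_all add: distr_id2)
  qed
qed

lemma gva_objective_cong:
  assumes "\<And>i. i < n \<Longrightarrow> sd i = sd' i"
  shows "gva_objective n m S mu sd = gva_objective n m S mu sd'"
proof -
  have "PiM {..<n} (\<lambda>i. gauss (mu i) (sd i)) = PiM {..<n} (\<lambda>i. gauss (mu i) (sd' i))"
    using assms by (intro PiM_cong) auto
  then show ?thesis
    unfolding gva_objective_def by simp
qed

lemma gva_objective_cycle:
  assumes "2 \<le> n" and sd: "\<And>i. i < n \<Longrightarrow> 0 \<le> sd i"
  shows "gva_objective n n (\<lambda>j. {j, Suc j mod n}) (\<lambda>_. mu) sd =
    real n * mu + sqrt (2 / pi) / 2 * (\<Sum>j<n. sqrt ((sd j)\<^sup>2 + (sd (Suc j mod n))\<^sup>2))"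
proof -
  let ?P = "PiM {..<n} (\<lambda>i. gauss mu (sd i))"
  have gauss: "\<And>i. i \<in> {..<n} \<Longrightarrow> prob_space (gauss mu (sd i))"
    using sd by (simp add: prob_space_gauss)
  interpret prob_space ?P
    using gauss by (rule prob_space_PiM)
  have indep: "indep_vars (\<lambda>_. borel) (\<lambda>i x. x i) {..<n}"
    using indep_vars_compose2[OF indep_vars_PiM_components[OF gauss], where Y="\<lambda>_ x. x"]
    by simp
  have law: "distr ?P borel (\<lambda>x. x i) = gauss mu (sd i)" if "i < n" for i
  proof -
    have "distr ?P borel (\<lambda>x. x i) = distr ?P (gauss mu (sd i)) (\<lambda>x. x i)"
      by (rule distr_cong) simp_all
    also have "\<dots> = gauss mu (sd i)"
      using gauss that by (intro distr_PiM_component) simp_all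
    finally show ?thesis .
  qed
  have "has_bochner_integral ?P (\<lambda>x. max (x j) (x (Suc j mod n)))
      (mu + sqrt (2 / pi) * sqrt ((sd j)\<^sup>2 + (sd (Suc j mod n))\<^sup>2) / 2)" if "j < n" for j
  proof -
    have "Suc j mod n \<noteq> j"
      using that \<open>2 \<le> n\<close> by (cases "Suc j = n") auto
    with that \<open>2 \<le> n\<close> show ?thesis
      by (intro has_bochner_integral_max_indep_gauss indep_var_of_indep_vars[OF indep] law sd) auto
  qed
  then have "has_bochner_integral ?P (\<lambda>x. \<Sum>j<n. Max {x j, x (Suc j mod n)})
      (\<Sum>j<n. mu + sqrt (2 / pi) * sqrt ((sd j)\<^sup>2 + (sd (Suc j mod n))\<^sup>2) / 2)"
    by (intro has_bochner_integral_sum) simp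
  then show ?thesis
    unfolding gva_objective_def
    by (simp add: has_bochner_integral_iff sum.distrib sum_distrib_left sum_divide_distrib)
qed

lemma sum_sqrt_le_sqrt_card_mult_sum:
  fixes a :: "'a \<Rightarrow> real"
  assumes "\<And>j. j \<in> A \<Longrightarrow> 0 \<le> a j"
  shows "(\<Sum>j\<in>A. sqrt (a j)) \<le> sqrt (card A * (\<Sum>j\<in>A. a j))"
proof (rule real_le_rsqrt)
  have "(\<Sum>j\<in>A. 1 * sqrt (a j))\<^sup>2 \<le> (\<Sum>j\<in>A. 1\<^sup>2) * (\<Sum>j\<in>A. (sqrt (a j))\<^sup>2)"
    by (rule Cauchy_Schwarz_ineq_sum)
  with assms show "(\<Sum>j\<in>A. sqrt (a j))\<^sup>2 \<le> card A * (\<Sum>j\<in>A. a j)"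
    by simp
qed

lemma sum_lessThan_Suc_mod:
  assumes "0 < n"
  shows "(\<Sum>j<n. f (Suc j mod n)) = (\<Sum>j<n. f j)"
proof -
  obtain m where m: "n = Suc m"
    using assms gr0_conv_Suc by blast
  have "(\<Sum>j<Suc m. f (Suc j mod Suc m)) = (\<Sum>j<m. f (Suc j)) + f 0"
    by (simp add: sum.lessThan_Suc)
  also have "\<dots> = (\<Sum>j<Suc m. f j)"
    by (subst sum.lessThan_Suc_shift) (simp add: add.commute)
  finally show ?thesis
    using m by simp
qed

lemma cycle_sum_sqrt_le:
  fixes s :: "nat \<Rightarrow> real"
  assumes "0 < n"
  shows "(\<Sum>j<n. sqrt ((s j)\<^sup>2 + (s (Suc j mod n))\<^sup>2)) \<le> sqrt (2 * n * (\<Sum>j<n. (s j)\<^sup>2))"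
proof -
  have "(\<Sum>j<n. (s j)\<^sup>2 + (s (Suc j mod n))\<^sup>2) = 2 * (\<Sum>j<n. (s j)\<^sup>2)"
    using sum_lessThan_Suc_mod[OF assms, of "\<lambda>j. (s j)\<^sup>2"] by (simp add: sum.distrib)
  then show ?thesis
    using sum_sqrt_le_sqrt_card_mult_sum[of "{..<n}" "\<lambda>j. (s j)\<^sup>2 + (s (Suc j mod n))\<^sup>2"]
    by (simp add: mult_ac)
qed

lemma real_mult_sqrt_two_div: "0 < n \<Longrightarrow> real n * sqrt (2 / n) = sqrt (2 * n)"
proof -
  assume "0 < n"
  then have "sqrt (2 * n) = sqrt ((real n)\<^sup>2 * (2 / n))"
    by (simp add: power2_eq_square)
  then show ?thesis
    by (subst (asm) real_sqrt_mult) simp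
qed

theorem theorem7:
  fixes n :: nat and mu :: real
  assumes "n \<ge> 1"
  shows "gva_feasible n (\<lambda>i. sqrt (1 / real n)) \<and>
    (\<forall>sd. gva_feasible n sd \<longrightarrow>
       gva_objective n n (\<lambda>j. {j, Suc j mod n}) (\<lambda>_. mu) sd
       \<le> gva_objective n n (\<lambda>j. {j, Suc j mod n}) (\<lambda>_. mu) (\<lambda>i. sqrt (1 / real n)))"
proof -
  let ?S = "\<lambda>j. {j, Suc j mod n}" and ?u = "\<lambda>i::nat. sqrt (1 / real n)"
  have uniform_feasible: "gva_feasible n ?u"
    using assms by (simp add: gva_feasible_def)
  have "gva_objective n n ?S (\<lambda>_. mu) sd \<le> gva_objective n n ?S (\<lambda>_. mu) ?u"
    if feasible: "gva_feasible n sd" for sd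
  proof (cases "n = 1")
    case True
    then have "sd 0 = 1"
      using feasible by (auto simp: gva_feasible_def power2_eq_1_iff)
    with True have "gva_objective n n ?S (\<lambda>_. mu) sd = gva_objective n n ?S (\<lambda>_. mu) ?u"
      by (intro gva_objective_cong) simp
    then show ?thesis
      by simp
  next
    case False
    with assms have "2 \<le> n"
      by simp
    have "(\<Sum>j<n. sqrt ((sd j)\<^sup>2 + (sd (Suc j mod n))\<^sup>2)) \<le> sqrt (2 * n)"
      using cycle_sum_sqrt_le[of n sd] feasible assms by (simp add: gva_feasible_def)
    also have "\<dots> = (\<Sum>j<n. sqrt ((?u j)\<^sup>2 + (?u (Suc j mod n))\<^sup>2))"
      using assms real_mult_sqrt_two_div[of n] by simp
    finally show ?thesis
      using feasible uniform_feasible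
      by (simp add: gva_objective_cycle[OF \<open>2 \<le> n\<close>] gva_feasible_def)
  qed
  with uniform_feasible show ?thesis
    by blast
qed

end
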